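(* Let $C$ be an $X$-completely transitive code in $H(m,q)$. Then $(m+1)|X|\ge q^m$.
   Context: $H(m,q)$ is the Hamming graph whose vertices are the $m$-tuples over an alphabet $Q$ of size $q$, two vertices adjacent iff they differ in exactly one coordinate; a code is a set $C$ of vertices, $d$ is Hamming distance, $\rho=\max_\alpha d(\alpha,C)$ its covering radius and $C_i=\{\alpha: d(\alpha,C)=i\}$. For a subgroup $X$ of the automorphism group of $H(m,q)$ stabilising $C$ setwise, $C$ is $X$-completely transitive if $X$ acts transitively on each of $C,C_1,\dots,C_\rho$. *)

theory Defs
  imports "HOL-Library.FuncSet"
begin

definition hamming_vertices :: "nat \<Rightarrow> 'a set \<Rightarrow> (nat \<Rightarrow> 'a) set" where
  "hamming_vertices m Q = PiE {..<m} (\<lambda>_. Q)"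

definition hamming_dist :: "nat \<Rightarrow> (nat \<Rightarrow> 'a) \<Rightarrow> (nat \<Rightarrow> 'a) \<Rightarrow> nat" where
  "hamming_dist m x y = card {i \<in> {..<m}. x i \<noteq> y i}"

text \<open>Graph automorphisms of H(m,q): bijections of the vertex set preserving adjacency
  (distance 1) in both directions; identity outside the vertex set, so that they are
  determined by their action on vertices.\<close>
definition hamming_aut :: "nat \<Rightarrow> 'a set \<Rightarrow> ((nat \<Rightarrow> 'a) \<Rightarrow> (nat \<Rightarrow> 'a)) \<Rightarrow> bool" where
  "hamming_aut m Q g \<longleftrightarrow>
     bij_betw g (hamming_vertices m Q) (hamming_vertices m Q) \<and>
     (\<forall>x\<in>hamming_vertices m Q. \<forall>y\<in>hamming_vertices m Q.
        hamming_dist m (g x) (g y) = 1 \<longleftrightarrow> hamming_dist m x y = 1) \<and>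
     (\<forall>x. x \<notin> hamming_vertices m Q \<longrightarrow> g x = x)"

definition aut_inv :: "nat \<Rightarrow> 'a set \<Rightarrow> ((nat \<Rightarrow> 'a) \<Rightarrow> (nat \<Rightarrow> 'a)) \<Rightarrow> (nat \<Rightarrow> 'a) \<Rightarrow> (nat \<Rightarrow> 'a)" where
  "aut_inv m Q g = (\<lambda>x. if x \<in> hamming_vertices m Q then inv_into (hamming_vertices m Q) g x else x)"

definition aut_subgroup :: "nat \<Rightarrow> 'a set \<Rightarrow> ((nat \<Rightarrow> 'a) \<Rightarrow> (nat \<Rightarrow> 'a)) set \<Rightarrow> bool" where
  "aut_subgroup m Q X \<longleftrightarrow>
     (\<forall>g\<in>X. hamming_aut m Q g) \<and> id \<in> X \<and>
     (\<forall>g\<in>X. \<forall>h\<in>X. g \<circ> h \<in> X) \<and> (\<forall>g\<in>X. aut_inv m Q g \<in> X)"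

definition dist_code :: "nat \<Rightarrow> (nat \<Rightarrow> 'a) \<Rightarrow> (nat \<Rightarrow> 'a) set \<Rightarrow> nat" where
  "dist_code m \<alpha> C = Min ((hamming_dist m \<alpha>) ` C)"

definition covering_radius :: "nat \<Rightarrow> 'a set \<Rightarrow> (nat \<Rightarrow> 'a) set \<Rightarrow> nat" where
  "covering_radius m Q C = Max ((\<lambda>\<alpha>. dist_code m \<alpha> C) ` hamming_vertices m Q)"

definition code_layer :: "nat \<Rightarrow> 'a set \<Rightarrow> (nat \<Rightarrow> 'a) set \<Rightarrow> nat \<Rightarrow> (nat \<Rightarrow> 'a) set" where
  "code_layer m Q C i = {\<alpha> \<in> hamming_vertices m Q. dist_code m \<alpha> C = i}"

definition completely_transitive ::
  "nat \<Rightarrow> 'a set \<Rightarrow> ((nat \<Rightarrow> 'a) \<Rightarrow> (nat \<Rightarrow> 'a)) set \<Rightarrow> (nat \<Rightarrow> 'a) set \<Rightarrow> bool" where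
  "completely_transitive m Q X C \<longleftrightarrow>
     aut_subgroup m Q X \<and> C \<subseteq> hamming_vertices m Q \<and> C \<noteq> {} \<and>
     (\<forall>g\<in>X. g ` C = C) \<and>
     (\<forall>i \<le> covering_radius m Q C. \<forall>\<alpha>\<in>code_layer m Q C i. \<forall>\<beta>\<in>code_layer m Q C i.
        \<exists>g\<in>X. g \<alpha> = \<beta>)"

end

theory Submission
  imports Defs
begin

text \<open>Every vertex lies in one of the layers \<open>C\<^sub>0, \<dots>, C\<^sub>m\<close>, and complete transitivity
  makes each layer a single \<open>X\<close>-orbit, so of size at most \<open>|X|\<close>. Counting the \<open>q\<^sup>m\<close> vertices
  layer by layer gives \<open>q\<^sup>m \<le> (m + 1) |X|\<close>.\<close>

lemma finite_hamming_vertices: "finite Q \<Longrightarrow> finite (hamming_vertices m Q)"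
  unfolding hamming_vertices_def by (simp add: finite_PiE)

lemma card_hamming_vertices: "finite Q \<Longrightarrow> card (hamming_vertices m Q) = card Q ^ m"
  unfolding hamming_vertices_def by (simp add: card_PiE)

lemma hamming_dist_le: "hamming_dist m x y \<le> m"
  unfolding hamming_dist_def
  using card_mono[of "{..<m}" "{i \<in> {..<m}. x i \<noteq> y i}"] by auto

lemma dist_code_le_hamming_dist:
  assumes "finite C" and "c \<in> C"
  shows "dist_code m \<alpha> C \<le> hamming_dist m \<alpha> c"
  unfolding dist_code_def using assms by (intro Min_le) auto

lemma dist_code_le:
  assumes "finite C" and "C \<noteq> {}"
  shows "dist_code m \<alpha> C \<le> m"
proof -
  obtain c where "c \<in> C" using assms(2) by blast
  then show ?thesis
    using dist_code_le_hamming_dist[OF assms(1)] hamming_dist_le le_trans by blast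
qed

lemma hamming_vertices_eq_UN_code_layer:
  assumes "finite C" and "C \<noteq> {}"
  shows "hamming_vertices m Q = (\<Union>i\<le>m. code_layer m Q C i)"
  using dist_code_le[OF assms] unfolding code_layer_def by auto

lemma code_layer_le_covering_radius:
  assumes "finite Q" and "\<alpha> \<in> code_layer m Q C i"
  shows "i \<le> covering_radius m Q C"
  using assms unfolding covering_radius_def code_layer_def
  by (intro Max_ge) (auto simp: finite_hamming_vertices)

lemma finite_maps_fixing_outside:
  assumes "finite A" and "finite B"
  shows "finite {f. f ` A \<subseteq> B \<and> (\<forall>x. x \<notin> A \<longrightarrow> f x = x)}"
    (is "finite ?F")
proof (rule finite_imageD)
  show "inj_on (\<lambda>f. restrict f A) ?F"
  proof (rule inj_onI, rule ext)
    fix f g x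
    assume "f \<in> ?F" "g \<in> ?F" and "restrict f A = restrict g A"
    then show "f x = g x"
      by (cases "x \<in> A") (auto dest: fun_cong[where x = x])
  qed
  have "(\<lambda>f. restrict f A) ` ?F \<subseteq> A \<rightarrow>\<^sub>E B" by auto
  then show "finite ((\<lambda>f. restrict f A) ` ?F)"
    using assms by (rule finite_subset[OF _ finite_PiE])
qed

lemma finite_aut_subgroup:
  assumes "finite Q" and "aut_subgroup m Q X"
  shows "finite X"
proof (rule finite_subset)
  let ?V = "hamming_vertices m Q"
  show "X \<subseteq> {g. g ` ?V \<subseteq> ?V \<and> (\<forall>x. x \<notin> ?V \<longrightarrow> g x = x)}"
  proof
    fix g assume "g \<in> X"
    then have "hamming_aut m Q g" using assms(2) unfolding aut_subgroup_def by blast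
    then show "g \<in> {g. g ` ?V \<subseteq> ?V \<and> (\<forall>x. x \<notin> ?V \<longrightarrow> g x = x)}"
      unfolding hamming_aut_def bij_betw_def by simp
  qed
  show "finite {g. g ` ?V \<subseteq> ?V \<and> (\<forall>x. x \<notin> ?V \<longrightarrow> g x = x)}"
    using assms(1) by (intro finite_maps_fixing_outside finite_hamming_vertices)
qed

lemma card_le_card_if_transitive:
  assumes "finite X" and "\<forall>a\<in>A. \<forall>b\<in>A. \<exists>g\<in>X. g a = b"
  shows "card A \<le> card X"
proof (cases "A = {}")
  case False
  then obtain a where "a \<in> A" by blast
  then have "A \<subseteq> (\<lambda>g. g a) ` X" using assms(2) by fastforce
  then have "card A \<le> card ((\<lambda>g. g a) ` X)" using assms(1) by (intro card_mono) auto
  also have "\<dots> \<le> card X" using assms(1) by (rule card_image_le)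
  finally show ?thesis .
qed simp

lemma card_code_layer_le:
  assumes "finite Q" and "completely_transitive m Q X C"
  shows "card (code_layer m Q C i) \<le> card X"
proof (cases "code_layer m Q C i = {}")
  case False
  then have "i \<le> covering_radius m Q C"
    using code_layer_le_covering_radius[OF assms(1)] by blast
  moreover have "aut_subgroup m Q X"
    using assms(2) unfolding completely_transitive_def by blast
  ultimately show ?thesis
    using assms unfolding completely_transitive_def
    by (intro card_le_card_if_transitive finite_aut_subgroup) blast+
qed simp

theorem lemma2p9:
  fixes m q :: nat and Q :: "'a set" and X :: "((nat \<Rightarrow> 'a) \<Rightarrow> (nat \<Rightarrow> 'a)) set"
    and C :: "(nat \<Rightarrow> 'a) set"
  assumes "finite Q" and "card Q = q"
    and "completely_transitive m Q X C"
  shows "(m + 1) * card X \<ge> q ^ m"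
proof -
  have "C \<subseteq> hamming_vertices m Q" and "C \<noteq> {}"
    using assms(3) unfolding completely_transitive_def by blast+
  then have C: "finite C" "C \<noteq> {}"
    using finite_subset finite_hamming_vertices[OF assms(1)] by blast+
  have "q ^ m = card (hamming_vertices m Q)"
    using assms(1,2) by (simp add: card_hamming_vertices)
  also have "\<dots> = card (\<Union>i\<le>m. code_layer m Q C i)"
    using hamming_vertices_eq_UN_code_layer[OF C] by simp
  also have "\<dots> \<le> (\<Sum>i\<le>m. card (code_layer m Q C i))"
    by (rule card_UN_le) simp
  also have "\<dots> \<le> (\<Sum>i\<le>m. card X)"
    using card_code_layer_le[OF assms(1,3)] by (intro sum_mono)
  also have "\<dots> = (m + 1) * card X" by simp
  finally show ?thesis .
qed

end
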